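(* There exist positive constants $c_1,c_2$ and constants $\delta_0=1/8$, $\alpha_0=e^{-8}/4$ such that for every $\delta\in(0,\delta_0)$, every $\alpha\in(0,\alpha_0)$, and every (randomized) algorithm that solves $(\delta,\alpha)$-BAIF, there exists a problem instance on which the expected number of arm pulls $T$ of the algorithm satisfies $\mathbb{E}[T]\ge c_1\frac{1}{\delta^2}\log\frac{c_2}{\alpha}$. In particular, the sample complexity of any algorithm solving $(\delta,\alpha)$-BAIF is $\Omega(\frac{1}{\delta^2}\log\frac1\alpha)$.
   Context: Best arm identification with failure, $(\delta,\alpha)$-BAIF: there are two arms $a_0,a_1$ with binary rewards in $\{0,1\}$; each pull of an arm gives an independent Bernoulli reward, and one arm has mean $\frac12+\frac\delta2$ (the optimal arm) while the other has mean $\frac12-\frac\delta2$, where $\delta\in(0,1)$. An algorithm adaptively pulls arms and then either returns FAIL or returns an arm. It solves $(\delta,\alpha)$-BAIF if on every such instance it returns FAIL with probability at most $\frac18$, and, conditioned on not returning FAIL, it returns the optimal arm with probability at least $1-\alpha$. *)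

theory Defs
  imports "HOL-Probability.Probability"
begin

text \<open>Two arms, encoded as bool (a0 = False, a1 = True). Rewards are bool (True = 1).
  At each step a (randomized, adaptive) algorithm chooses, as a function of the history,
  a probability distribution over actions: pull an arm, or stop with an output
  (None = FAIL, Some a = return arm a).\<close>

datatype action = Pull bool | Stop "bool option"

type_synonym history = "(bool \<times> bool) list"
type_synonym policy = "history \<Rightarrow> action pmf"

text \<open>State after n decision steps: (history, None) if still running,
  (history, Some out) if stopped with output out.\<close>
fun run :: "policy \<Rightarrow> (bool \<Rightarrow> real) \<Rightarrow> nat \<Rightarrow> (history \<times> bool option option) pmf" where
  "run A mu 0 = return_pmf ([], None)"
| "run A mu (Suc n) = bind_pmf (run A mu n) (\<lambda>(h, s).
     case s of
       Some out \<Rightarrow> return_pmf (h, Some out)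
     | None \<Rightarrow> bind_pmf (A h) (\<lambda>act. case act of
           Stop out \<Rightarrow> return_pmf (h, Some out)
         | Pull a \<Rightarrow> map_pmf (\<lambda>r. (h @ [(a, r)], None)) (bernoulli_pmf (mu a))))"

definition out_prob :: "policy \<Rightarrow> (bool \<Rightarrow> real) \<Rightarrow> bool option \<Rightarrow> real" where
  "out_prob A mu out = (SUP n. measure_pmf.prob (run A mu n) {x. snd x = Some out})"

text \<open>Expected number of arm pulls: E[T] = sum_n P(T > n); T > n iff the process is
  still running after n+1 decision steps.\<close>
definition expected_pulls :: "policy \<Rightarrow> (bool \<Rightarrow> real) \<Rightarrow> ennreal" where
  "expected_pulls A mu = (\<Sum>n. ennreal (measure_pmf.prob (run A mu (Suc n)) {x. snd x = None}))"

definition inst :: "real \<Rightarrow> bool \<Rightarrow> bool \<Rightarrow> real" where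
  "inst \<delta> opt = (\<lambda>a. if a = opt then 1/2 + \<delta>/2 else 1/2 - \<delta>/2)"

text \<open>(delta,alpha)-BAIF: on every instance, P(FAIL) \<le> 1/8 and
  P(return optimal) \<ge> (1 - alpha) * P(not FAIL), i.e. conditioned on not failing
  the optimal arm is returned w.p. \<ge> 1 - alpha.\<close>
definition solves_BAIF :: "policy \<Rightarrow> real \<Rightarrow> real \<Rightarrow> bool" where
  "solves_BAIF A \<delta> \<alpha> \<longleftrightarrow> (\<forall>opt.
     out_prob A (inst \<delta> opt) None \<le> 1/8 \<and>
     out_prob A (inst \<delta> opt) (Some opt) \<ge>
       (1 - \<alpha>) * (out_prob A (inst \<delta> opt) (Some opt) + out_prob A (inst \<delta> opt) (Some (\<not> opt))))"

end

theory Submission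
  imports Defs
begin

(* Change of measure through the second moment of the likelihood ratio.  Let P1 and P0 be the
   laws of the run on the instances whose optimal arm is opt and not opt.  The policy's own
   randomness is the same under both, so dP1/dP0 of a history is the product of the reward
   likelihood ratios, and every pull multiplies its P1-expectation by at most the Bernoulli
   chi-square factor 1 + 4 delta^2/(1 - delta^2) <= 1 + 5 delta^2.  By AM-GM, P1(S) is at most
   l P0(S) + E1[dP1/dP0]/(4 l) for every event S and every l > 0.
   If the run is still going at time t with P1-probability at most 1/8, then it returns opt
   with P1-probability at least 1/2 but with P0-probability at most 2 alpha; taking
   l = 1/(8 alpha) forces (1 + 5 delta^2)^t >= 1/(8 alpha).  Hence for every smaller t the run
   is still going with probability above 1/8, and E[T] >= t P1(T > t) gives the bound. *)

lemma pmf_bind_pmf_ratio: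
  assumes M: "\<And>y. pmf M1 y = w y * pmf M0 y"
    and K: "\<And>y. w y * pmf (K1 y) x = c * pmf (K0 y) x"
    and "0 \<le> c"
  shows "pmf (bind_pmf M1 K1) x = c * pmf (bind_pmf M0 K0) x"
proof -
  have "ennreal (pmf (bind_pmf M1 K1) x) = (\<integral>\<^sup>+y. ennreal (pmf M1 y * pmf (K1 y) x) \<partial>count_space UNIV)"
    by (simp add: ennreal_pmf_bind nn_integral_measure_pmf ennreal_mult)
  also have "\<dots> = (\<integral>\<^sup>+y. ennreal c * ennreal (pmf M0 y * pmf (K0 y) x) \<partial>count_space UNIV)"
  proof (intro nn_integral_cong)
    fix y
    have "pmf M1 y * pmf (K1 y) x = pmf M0 y * (w y * pmf (K1 y) x)"
      by (simp add: M)
    then show "ennreal (pmf M1 y * pmf (K1 y) x) = ennreal c * ennreal (pmf M0 y * pmf (K0 y) x)"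
      using \<open>0 \<le> c\<close> by (simp add: K ennreal_mult[symmetric] mult.left_commute)
  qed
  also have "\<dots> = ennreal c * ennreal (pmf (bind_pmf M0 K0) x)"
    by (simp add: nn_integral_cmult ennreal_pmf_bind nn_integral_measure_pmf ennreal_mult)
  finally show ?thesis
    using \<open>0 \<le> c\<close> by (simp add: ennreal_mult[symmetric])
qed

lemma measure_pmf_prob_change_of_measure:
  fixes M1 M0 :: "'a pmf"
  assumes ratio: "\<And>x. pmf M1 x = r x * pmf M0 x" and r_nonneg: "\<And>x. 0 \<le> r x"
    and moment: "(\<integral>\<^sup>+x. ennreal (r x) \<partial>measure_pmf M1) \<le> ennreal C"
    and "0 \<le> C" and "0 < l"
  shows "measure_pmf.prob M1 S \<le> l * measure_pmf.prob M0 S + C / (4 * l)"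
proof -
  have pointwise: "pmf M1 x \<le> l * pmf M0 x + 1 / (4 * l) * (pmf M1 x * r x)" for x
  proof -
    \<comment> \<open>AM-GM: \<open>r \<le> l + r\<^sup>2 / (4 l)\<close>\<close>
    have "r x \<le> l + r x * r x / (4 * l)"
      using sum_squares_ge_zero[of "r x - 2 * l" 0] \<open>0 < l\<close>
      by (simp add: field_simps power2_eq_square algebra_simps)
    from mult_right_mono[OF this pmf_nonneg[of M0 x]]
    show ?thesis
      by (simp add: ratio algebra_simps)
  qed
  have "emeasure M1 S = (\<integral>\<^sup>+x. ennreal (pmf M1 x) * indicator S x \<partial>count_space UNIV)"
    by (simp add: nn_integral_measure_pmf[symmetric])
  also have "\<dots> \<le> (\<integral>\<^sup>+x. ennreal l * (ennreal (pmf M0 x) * indicator S x)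
      + ennreal (1 / (4 * l)) * (ennreal (pmf M1 x) * ennreal (r x)) \<partial>count_space UNIV)"
    using pointwise \<open>0 < l\<close> r_nonneg
    by (intro nn_integral_mono)
       (simp add: indicator_def ennreal_mult[symmetric] ennreal_plus[symmetric] ennreal_leI
         del: ennreal_plus)
  also have "\<dots> = ennreal l * emeasure M0 S + ennreal (1 / (4 * l)) * (\<integral>\<^sup>+x. ennreal (r x) \<partial>measure_pmf M1)"
    by (simp add: nn_integral_add nn_integral_cmult nn_integral_measure_pmf[symmetric])
  also have "\<dots> \<le> ennreal l * emeasure M0 S + ennreal (1 / (4 * l)) * ennreal C"
    using moment by (intro add_left_mono mult_left_mono) auto
  also have "\<dots> = ennreal (l * measure_pmf.prob M0 S + C / (4 * l))"
    using \<open>0 < l\<close> \<open>0 \<le> C\<close>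
    by (simp add: measure_pmf.emeasure_eq_measure ennreal_mult[symmetric] ennreal_plus[symmetric] del: ennreal_plus)
  finally show ?thesis
    using \<open>0 < l\<close> \<open>0 \<le> C\<close>
    by (simp add: measure_pmf.emeasure_eq_measure ennreal_plus[symmetric] del: ennreal_plus)
qed

lemma nn_integral_bernoulli_likelihood_ratio:
  assumes "0 \<le> p" "p \<le> 1" "0 < q" "q < 1"
  shows "(\<integral>\<^sup>+r. ennreal (pmf (bernoulli_pmf p) r / pmf (bernoulli_pmf q) r) \<partial>measure_pmf (bernoulli_pmf p))
    = ennreal (1 + (p - q)\<^sup>2 / (q * (1 - q)))"
proof -
  have "p * (p / q) + (1 - p) * ((1 - p) / (1 - q)) = 1 + (p - q)\<^sup>2 / (q * (1 - q))"
    using assms by (simp add: field_simps power2_eq_square)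
  then show ?thesis
    using assms
    by (simp add: nn_integral_measure_pmf nn_integral_count_space_finite UNIV_bool
        ennreal_mult[symmetric] ennreal_plus[symmetric] del: ennreal_plus)
qed

definition nondegenerate :: "(bool \<Rightarrow> real) \<Rightarrow> bool" where
  "nondegenerate mu \<longleftrightarrow> (\<forall>a. 0 < mu a \<and> mu a < 1)"

definition reward_ratio :: "(bool \<Rightarrow> real) \<Rightarrow> (bool \<Rightarrow> real) \<Rightarrow> bool \<Rightarrow> bool \<Rightarrow> real" where
  "reward_ratio mu1 mu0 a r = pmf (bernoulli_pmf (mu1 a)) r / pmf (bernoulli_pmf (mu0 a)) r"

definition likelihood_ratio :: "(bool \<Rightarrow> real) \<Rightarrow> (bool \<Rightarrow> real) \<Rightarrow> history \<Rightarrow> real" where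
  "likelihood_ratio mu1 mu0 h = (\<Prod>(a, r)\<leftarrow>h. reward_ratio mu1 mu0 a r)"

definition transition :: "(bool \<Rightarrow> real) \<Rightarrow> history \<Rightarrow> action \<Rightarrow> (history \<times> bool option option) pmf" where
  "transition mu h act = (case act of
      Stop out \<Rightarrow> return_pmf (h, Some out)
    | Pull a \<Rightarrow> map_pmf (\<lambda>r. (h @ [(a, r)], None)) (bernoulli_pmf (mu a)))"

definition step :: "policy \<Rightarrow> (bool \<Rightarrow> real) \<Rightarrow> history \<times> bool option option \<Rightarrow> (history \<times> bool option option) pmf" where
  "step A mu = (\<lambda>(h, s). case s of
      Some out \<Rightarrow> return_pmf (h, Some out)
    | None \<Rightarrow> bind_pmf (A h) (transition mu h))"

lemma run_Suc_step: "run A mu (Suc n) = bind_pmf (run A mu n) (step A mu)"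
  unfolding step_def transition_def[abs_def] by simp

lemma likelihood_ratio_Nil [simp]: "likelihood_ratio mu1 mu0 [] = 1"
  by (simp add: likelihood_ratio_def)

lemma likelihood_ratio_snoc [simp]:
  "likelihood_ratio mu1 mu0 (h @ [(a, r)]) = likelihood_ratio mu1 mu0 h * reward_ratio mu1 mu0 a r"
  by (simp add: likelihood_ratio_def)

lemma pmf_bernoulli_pos: "nondegenerate mu \<Longrightarrow> 0 < pmf (bernoulli_pmf (mu a)) r"
  unfolding nondegenerate_def by (cases r) (auto simp: less_imp_le)

context
  fixes mu1 mu0 :: "bool \<Rightarrow> real"
  assumes nondeg1: "nondegenerate mu1" and nondeg0: "nondegenerate mu0"
begin

lemma reward_ratio_pos: "0 < reward_ratio mu1 mu0 a r"
  unfolding reward_ratio_def using pmf_bernoulli_pos nondeg1 nondeg0 by simp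

lemma likelihood_ratio_pos: "0 < likelihood_ratio mu1 mu0 h"
  unfolding likelihood_ratio_def by (induction h) (auto intro!: mult_pos_pos reward_ratio_pos)

lemma pmf_transition_ratio:
  "likelihood_ratio mu1 mu0 h * pmf (transition mu1 h act) x
     = likelihood_ratio mu1 mu0 (fst x) * pmf (transition mu0 h act) x"
proof (cases act)
  case (Stop out)
  then show ?thesis by (cases "x = (h, Some out)") (simp_all add: transition_def)
next
  case (Pull a)
  show ?thesis
  proof (cases "\<exists>r. x = (h @ [(a, r)], None)")
    case True
    then obtain r where x: "x = (h @ [(a, r)], None)" by blast
    have "inj (\<lambda>r. (h @ [(a, r)], None :: bool option option))" by (auto simp: inj_def)
    then show ?thesis
      using Pull x pmf_bernoulli_pos[OF nondeg0, of a r]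
      by (simp add: transition_def pmf_map_inj'[OF \<open>inj _\<close>] reward_ratio_def)
  next
    case False
    then have "pmf (map_pmf (\<lambda>r. (h @ [(a, r)], None)) (bernoulli_pmf (mu a))) x = 0" for mu
      by (intro pmf_map_outside) auto
    then show ?thesis by (simp add: Pull transition_def)
  qed
qed

lemma pmf_step_ratio:
  "likelihood_ratio mu1 mu0 (fst y) * pmf (step A mu1 y) x
     = likelihood_ratio mu1 mu0 (fst x) * pmf (step A mu0 y) x"
proof -
  obtain h s where y: "y = (h, s)" by fastforce
  show ?thesis
  proof (cases s)
    case None
    have "likelihood_ratio mu1 mu0 h * pmf (bind_pmf (A h) (transition mu1 h)) x
        = (\<integral>act. likelihood_ratio mu1 mu0 h * pmf (transition mu1 h act) x \<partial>measure_pmf (A h))"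
      by (simp add: pmf_bind)
    also have "\<dots> = (\<integral>act. likelihood_ratio mu1 mu0 (fst x) * pmf (transition mu0 h act) x \<partial>measure_pmf (A h))"
      by (simp only: pmf_transition_ratio)
    also have "\<dots> = likelihood_ratio mu1 mu0 (fst x) * pmf (bind_pmf (A h) (transition mu0 h)) x"
      by (simp add: pmf_bind)
    finally show ?thesis
      by (simp add: y None step_def)
  next
    case (Some out)
    then show ?thesis by (cases "x = (h, Some out)") (simp_all add: y step_def)
  qed
qed

lemma pmf_run_likelihood_ratio:
  "pmf (run A mu1 n) x = likelihood_ratio mu1 mu0 (fst x) * pmf (run A mu0 n) x"
proof (induction n arbitrary: x)
  case 0
  then show ?case by (cases "x = ([], None)") simp_all
next
  case (Suc n)
  show ?case unfolding run_Suc_step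
  proof (rule pmf_bind_pmf_ratio)
    show "pmf (run A mu1 n) y = likelihood_ratio mu1 mu0 (fst y) * pmf (run A mu0 n) y" for y
      by (rule Suc)
    show "likelihood_ratio mu1 mu0 (fst y) * pmf (step A mu1 y) x
        = likelihood_ratio mu1 mu0 (fst x) * pmf (step A mu0 y) x" for y
      by (rule pmf_step_ratio)
    show "0 \<le> likelihood_ratio mu1 mu0 (fst x)"
      using likelihood_ratio_pos less_imp_le by blast
  qed
qed

context
  fixes g :: real
  assumes one_le_g: "1 \<le> g"
    and reward_moment: "\<And>a. (\<integral>\<^sup>+r. ennreal (reward_ratio mu1 mu0 a r) \<partial>measure_pmf (bernoulli_pmf (mu1 a))) \<le> ennreal g"
begin

lemma nn_integral_transition_ratio_le:
  "(\<integral>\<^sup>+z. ennreal (likelihood_ratio mu1 mu0 (fst z)) \<partial>measure_pmf (transition mu1 h act))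
     \<le> ennreal (g * likelihood_ratio mu1 mu0 h)"
proof (cases act)
  case (Stop out)
  then show ?thesis
    using one_le_g likelihood_ratio_pos[of h] by (simp add: transition_def ennreal_leI)
next
  case (Pull a)
  have "(\<integral>\<^sup>+z. ennreal (likelihood_ratio mu1 mu0 (fst z)) \<partial>measure_pmf (transition mu1 h act))
      = ennreal (likelihood_ratio mu1 mu0 h)
        * (\<integral>\<^sup>+r. ennreal (reward_ratio mu1 mu0 a r) \<partial>measure_pmf (bernoulli_pmf (mu1 a)))"
    using likelihood_ratio_pos[of h]
    by (simp add: Pull transition_def ennreal_mult' nn_integral_cmult)
  also have "\<dots> \<le> ennreal (likelihood_ratio mu1 mu0 h) * ennreal g"
    using reward_moment by (rule mult_left_mono) simp
  also have "\<dots> = ennreal (g * likelihood_ratio mu1 mu0 h)"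
    using likelihood_ratio_pos[of h] one_le_g by (simp add: ennreal_mult mult.commute)
  finally show ?thesis .
qed

lemma nn_integral_step_ratio_le:
  "(\<integral>\<^sup>+z. ennreal (likelihood_ratio mu1 mu0 (fst z)) \<partial>measure_pmf (step A mu1 y))
     \<le> ennreal (g * likelihood_ratio mu1 mu0 (fst y))"
proof -
  obtain h s where y: "y = (h, s)" by fastforce
  show ?thesis
  proof (cases s)
    case None
    have "(\<integral>\<^sup>+z. ennreal (likelihood_ratio mu1 mu0 (fst z)) \<partial>measure_pmf (step A mu1 y))
        = (\<integral>\<^sup>+act. \<integral>\<^sup>+z. ennreal (likelihood_ratio mu1 mu0 (fst z)) \<partial>measure_pmf (transition mu1 h act)
            \<partial>measure_pmf (A h))"
      by (simp add: y None step_def)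
    also have "\<dots> \<le> (\<integral>\<^sup>+act. ennreal (g * likelihood_ratio mu1 mu0 h) \<partial>measure_pmf (A h))"
      by (intro nn_integral_mono nn_integral_transition_ratio_le)
    finally show ?thesis
      by (simp add: y measure_pmf.emeasure_space_1)
  next
    case (Some out)
    then show ?thesis
      using one_le_g likelihood_ratio_pos[of h] by (simp add: y step_def ennreal_leI)
  qed
qed

lemma nn_integral_run_ratio_le:
  "(\<integral>\<^sup>+z. ennreal (likelihood_ratio mu1 mu0 (fst z)) \<partial>measure_pmf (run A mu1 n)) \<le> ennreal (g ^ n)"
proof (induction n)
  case 0
  then show ?case by simp
next
  case (Suc n)
  have "(\<integral>\<^sup>+z. ennreal (likelihood_ratio mu1 mu0 (fst z)) \<partial>measure_pmf (run A mu1 (Suc n)))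
      \<le> (\<integral>\<^sup>+y. ennreal g * ennreal (likelihood_ratio mu1 mu0 (fst y)) \<partial>measure_pmf (run A mu1 n))"
    unfolding run_Suc_step nn_integral_bind_pmf
    using nn_integral_step_ratio_le one_le_g
    by (intro nn_integral_mono) (simp add: ennreal_mult')
  also have "\<dots> = ennreal g * (\<integral>\<^sup>+y. ennreal (likelihood_ratio mu1 mu0 (fst y)) \<partial>measure_pmf (run A mu1 n))"
    by (rule nn_integral_cmult) simp
  also have "\<dots> \<le> ennreal g * ennreal (g ^ n)"
    using Suc by (rule mult_left_mono) simp
  also have "\<dots> = ennreal (g ^ Suc n)"
    using one_le_g by (simp add: ennreal_mult)
  finally show ?case .
qed

end

end

abbreviation prob_running :: "policy \<Rightarrow> (bool \<Rightarrow> real) \<Rightarrow> nat \<Rightarrow> real" where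
  "prob_running A mu n \<equiv> measure_pmf.prob (run A mu n) {x. snd x = None}"

abbreviation prob_output :: "policy \<Rightarrow> (bool \<Rightarrow> real) \<Rightarrow> nat \<Rightarrow> bool option \<Rightarrow> real" where
  "prob_output A mu n out \<equiv> measure_pmf.prob (run A mu n) {x. snd x = Some out}"

lemma prob_running_Suc_le: "prob_running A mu (Suc n) \<le> prob_running A mu n"
proof -
  let ?X = "{x :: history \<times> bool option option. snd x = None}"
  have "emeasure (run A mu (Suc n)) ?X = (\<integral>\<^sup>+y. emeasure (step A mu y) ?X \<partial>measure_pmf (run A mu n))"
    by (simp only: run_Suc_step emeasure_bind_pmf)
  also have "\<dots> \<le> (\<integral>\<^sup>+y. indicator ?X y \<partial>measure_pmf (run A mu n))"
  proof (intro nn_integral_mono)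
    fix y :: "history \<times> bool option option"
    obtain h s where y: "y = (h, s)" by fastforce
    show "emeasure (step A mu y) ?X \<le> indicator ?X y"
      by (cases s) (simp add: y measure_pmf.emeasure_le_1, simp add: y step_def)
  qed
  also have "\<dots> = emeasure (run A mu n) ?X"
    by simp
  finally show ?thesis
    by (simp add: measure_pmf.emeasure_eq_measure del: run.simps)
qed

lemma expected_pulls_ge_prob_running: "ennreal (real t * prob_running A mu t) \<le> expected_pulls A mu"
proof -
  have "ennreal (real t * prob_running A mu t) = (\<Sum>n<t. ennreal (prob_running A mu t))"
    by (simp add: ennreal_mult' ennreal_of_nat_eq_real_of_nat)
  also have "\<dots> \<le> (\<Sum>n<t. ennreal (prob_running A mu (Suc n)))"
    using lift_Suc_antimono_le[of "prob_running A mu", OF prob_running_Suc_le]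
    by (intro sum_mono ennreal_leI) (simp del: run.simps)
  also have "\<dots> \<le> (\<Sum>n. ennreal (prob_running A mu (Suc n)))"
    by (intro sum_le_suminf) auto
  finally show ?thesis
    by (simp add: expected_pulls_def)
qed

lemma prob_output_le_out_prob: "prob_output A mu n out \<le> out_prob A mu out"
  unfolding out_prob_def by (rule cSUP_upper) (auto intro!: bdd_aboveI[where M = 1])

lemma out_prob_le_1: "out_prob A mu out \<le> 1"
  unfolding out_prob_def by (rule cSUP_least) auto

lemma out_prob_nonneg: "0 \<le> out_prob A mu out"
  by (rule order_trans[OF measure_nonneg prob_output_le_out_prob])

lemma prob_output_ge_one_minus:
  "1 - prob_running A mu n - prob_output A mu n None - prob_output A mu n (Some (\<not> a))
     \<le> prob_output A mu n (Some a)"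
proof -
  let ?P = "measure_pmf.prob (run A mu n)"
  let ?U = "{x :: history \<times> bool option option. snd x = None} \<union> {x. snd x = Some None}"
  let ?E = "?U \<union> {x. snd x = Some (Some (\<not> a))}"
  have "snd x = Some (Some a) \<longleftrightarrow> x \<notin> ?E" for x
    by (cases "snd x") (auto simp: not_None_eq)
  then have "{x. snd x = Some (Some a)} = UNIV - ?E"
    by blast
  then have "prob_output A mu n (Some a) = 1 - ?P ?E"
    using measure_pmf.prob_compl[of ?E "run A mu n"] by simp
  moreover have "?P ?E \<le> ?P ?U + prob_output A mu n (Some (\<not> a))"
    by (rule measure_Un_le) simp_all
  moreover have "?P ?U \<le> prob_running A mu n + prob_output A mu n None"
    by (rule measure_Un_le) simp_all
  ultimately show ?thesis by simp
qed

lemma solves_BAIF_fail_le: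
  "solves_BAIF A \<delta> \<alpha> \<Longrightarrow> out_prob A (inst \<delta> opt) None \<le> 1/8"
  unfolding solves_BAIF_def by blast

lemma solves_BAIF_wrong_arm_le:
  assumes "solves_BAIF A \<delta> \<alpha>" "0 \<le> \<alpha>" "\<alpha> \<le> 1/2"
  shows "out_prob A (inst \<delta> opt) (Some (\<not> opt)) \<le> 2 * \<alpha>"
proof -
  let ?right = "out_prob A (inst \<delta> opt) (Some opt)" and ?wrong = "out_prob A (inst \<delta> opt) (Some (\<not> opt))"
  have "(1 - \<alpha>) * (?right + ?wrong) \<le> ?right"
    using assms(1) unfolding solves_BAIF_def by blast
  then have "(1 - \<alpha>) * ?wrong \<le> \<alpha> * ?right"
    by (simp add: algebra_simps)
  also have "\<dots> \<le> \<alpha>"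
    using out_prob_le_1 \<open>0 \<le> \<alpha>\<close> by (rule mult_left_le)
  finally have "(1 - \<alpha>) * ?wrong \<le> \<alpha>" .
  moreover have "1/2 * ?wrong \<le> (1 - \<alpha>) * ?wrong"
    using out_prob_nonneg \<open>\<alpha> \<le> 1/2\<close> by (intro mult_right_mono) auto
  ultimately show ?thesis by simp
qed

lemma solves_BAIF_prob_output_optimal_ge:
  assumes "solves_BAIF A \<delta> \<alpha>" "0 \<le> \<alpha>" "\<alpha> \<le> 1/8" "prob_running A (inst \<delta> opt) n \<le> 1/8"
  shows "1/2 \<le> prob_output A (inst \<delta> opt) n (Some opt)"
  using prob_output_ge_one_minus[of A "inst \<delta> opt" n opt] assms
    solves_BAIF_fail_le[OF assms(1), of opt] solves_BAIF_wrong_arm_le[OF assms(1,2), of opt]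
    prob_output_le_out_prob[of A "inst \<delta> opt" n None]
    prob_output_le_out_prob[of A "inst \<delta> opt" n "Some (\<not> opt)"]
  by linarith

lemma nondegenerate_inst: "0 < \<delta> \<Longrightarrow> \<delta> < 1 \<Longrightarrow> nondegenerate (inst \<delta> opt)"
  unfolding nondegenerate_def inst_def by auto

lemma inst_reward_moment:
  assumes "0 < \<delta>" "\<delta> < 1"
  shows "(\<integral>\<^sup>+r. ennreal (reward_ratio (inst \<delta> opt) (inst \<delta> (\<not> opt)) a r)
      \<partial>measure_pmf (bernoulli_pmf (inst \<delta> opt a))) = ennreal (1 + 4 * \<delta>\<^sup>2 / (1 - \<delta>\<^sup>2))"
proof -
  let ?p = "inst \<delta> opt a" and ?q = "inst \<delta> (\<not> opt) a"
  have "(?p - ?q)\<^sup>2 / (?q * (1 - ?q)) = 4 * \<delta>\<^sup>2 / (1 - \<delta>\<^sup>2)"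
    using assms by (cases opt; cases a) (simp_all add: inst_def field_simps power2_eq_square)
  moreover have "0 \<le> ?p" "?p \<le> 1" "0 < ?q" "?q < 1"
    using assms by (auto simp: inst_def)
  note chi_square = nn_integral_bernoulli_likelihood_ratio[OF this]
  ultimately show ?thesis
    unfolding reward_ratio_def chi_square by simp
qed

lemma inst_reward_moment_le:
  assumes "0 < \<delta>" "\<delta> \<le> 1/4"
  shows "(\<integral>\<^sup>+r. ennreal (reward_ratio (inst \<delta> opt) (inst \<delta> (\<not> opt)) a r)
      \<partial>measure_pmf (bernoulli_pmf (inst \<delta> opt a))) \<le> ennreal (1 + 5 * \<delta>\<^sup>2)"
proof -
  have "\<delta>\<^sup>2 \<le> 1/16"
    using assms power_mono[of \<delta> "1/4" 2] by (simp add: power2_eq_square)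
  then have "\<delta>\<^sup>2 * \<delta>\<^sup>2 \<le> 1/5 * \<delta>\<^sup>2"
    by (intro mult_right_mono) auto
  then have "4 * \<delta>\<^sup>2 \<le> 5 * \<delta>\<^sup>2 * (1 - \<delta>\<^sup>2)"
    by (simp add: algebra_simps)
  with \<open>\<delta>\<^sup>2 \<le> 1/16\<close> have "4 * \<delta>\<^sup>2 / (1 - \<delta>\<^sup>2) \<le> 5 * \<delta>\<^sup>2"
    by (simp add: divide_le_eq)
  then show ?thesis
    using assms by (simp add: inst_reward_moment ennreal_leI del: ennreal_plus)
qed

lemma horizon_lower_bound:
  assumes "solves_BAIF A \<delta> \<alpha>" "0 < \<delta>" "\<delta> \<le> 1/4" "0 < \<alpha>" "\<alpha> \<le> 1/8"
    and "prob_running A (inst \<delta> opt) t \<le> 1/8"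
  shows "ln ((1/8) / \<alpha>) \<le> 5 * \<delta>\<^sup>2 * t"
proof -
  define g where "g = 1 + 5 * \<delta>\<^sup>2"
  define l where "l = 1 / (8 * \<alpha>)"
  have "1 \<le> g"
    by (simp add: g_def)
  have nondeg: "nondegenerate (inst \<delta> b)" for b
    using assms(2,3) by (simp add: nondegenerate_inst)
  have moment: "(\<integral>\<^sup>+x. ennreal (likelihood_ratio (inst \<delta> opt) (inst \<delta> (\<not> opt)) (fst x))
      \<partial>measure_pmf (run A (inst \<delta> opt) t)) \<le> ennreal (g ^ t)"
    unfolding g_def using assms(2,3)
    by (intro nn_integral_run_ratio_le nondeg inst_reward_moment_le) simp_all
  have "1/2 \<le> prob_output A (inst \<delta> opt) t (Some opt)"
    using solves_BAIF_prob_output_optimal_ge assms by simp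
  also have "\<dots> \<le> l * prob_output A (inst \<delta> (\<not> opt)) t (Some opt) + g ^ t / (4 * l)"
    using pmf_run_likelihood_ratio[OF nondeg nondeg] likelihood_ratio_pos[OF nondeg nondeg] moment
      \<open>1 \<le> g\<close> \<open>0 < \<alpha>\<close>
    by (intro measure_pmf_prob_change_of_measure) (auto simp: l_def less_imp_le)
  also have "\<dots> \<le> l * (2 * \<alpha>) + g ^ t / (4 * l)"
    using solves_BAIF_wrong_arm_le[OF assms(1), of "\<not> opt"] \<open>0 < \<alpha>\<close> \<open>\<alpha> \<le> 1/8\<close>
    by (intro add_right_mono mult_left_mono order_trans[OF prob_output_le_out_prob]) (auto simp: l_def)
  finally have "(1/8) / \<alpha> \<le> g ^ t"
    using \<open>0 < \<alpha>\<close> by (simp add: l_def field_simps)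
  then have "ln ((1/8) / \<alpha>) \<le> t * ln g"
    using \<open>0 < \<alpha>\<close> \<open>1 \<le> g\<close> by (simp add: ln_realpow[symmetric])
  also have "\<dots> \<le> t * (g - 1)"
    using \<open>1 \<le> g\<close> ln_le_minus_one[of g] by (intro mult_left_mono) auto
  finally show ?thesis by (simp add: g_def mult.commute)
qed

lemma expected_pulls_lower_bound:
  assumes "solves_BAIF A \<delta> \<alpha>" "0 < \<delta>" "\<delta> \<le> 1/4" "0 < \<alpha>" "\<alpha> < 1/8"
  shows "ennreal ((ln ((1/8) / \<alpha>) / (10 * \<delta>\<^sup>2) - 1) / 8) \<le> expected_pulls A (inst \<delta> opt)"
proof -
  define x where "x = ln ((1/8) / \<alpha>) / (10 * \<delta>\<^sup>2)"
  define t where "t = nat \<lfloor>x\<rfloor>"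
  have "0 < x"
    using assms(2,4,5) by (simp add: x_def field_simps)
  then have t: "real t \<le> x" "x - 1 < real t"
    unfolding t_def by linarith+
  then have "5 * \<delta>\<^sup>2 * t < ln ((1/8) / \<alpha>)"
    using \<open>0 < x\<close> assms(2) by (simp add: x_def field_simps)
  then have "\<not> prob_running A (inst \<delta> opt) t \<le> 1/8"
    using horizon_lower_bound[OF assms(1-4) less_imp_le[OF assms(5)]] by fastforce
  have "(x - 1) / 8 \<le> real t * (1/8)"
    using t by simp
  also have "\<dots> \<le> real t * prob_running A (inst \<delta> opt) t"
    using \<open>\<not> prob_running A (inst \<delta> opt) t \<le> 1/8\<close> by (intro mult_left_mono) auto
  finally have "ennreal ((x - 1) / 8) \<le> ennreal (real t * prob_running A (inst \<delta> opt) t)"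
    by (rule ennreal_leI)
  also have "\<dots> \<le> expected_pulls A (inst \<delta> opt)"
    by (rule expected_pulls_ge_prob_running)
  finally show ?thesis
    by (simp add: x_def)
qed

theorem lemma5p1:
  "\<exists>c1 c2 :: real. c1 > 0 \<and> c2 > 0 \<and>
     (\<forall>\<delta> \<alpha> :: real. \<forall>A :: policy.
        0 < \<delta> \<longrightarrow> \<delta> < 1/8 \<longrightarrow> 0 < \<alpha> \<longrightarrow> \<alpha> < exp (-8) / 4 \<longrightarrow>
        solves_BAIF A \<delta> \<alpha> \<longrightarrow>
        (\<exists>opt. expected_pulls A (inst \<delta> opt) \<ge> ennreal (c1 * (1 / \<delta>^2) * ln (c2 / \<alpha>))))"
proof (rule exI[of _ "1/160"], rule exI[of _ "1/8"], intro conjI allI impI)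
  fix \<delta> \<alpha> :: real and A :: policy
  assume \<delta>: "0 < \<delta>" "\<delta> < 1/8" and \<alpha>: "0 < \<alpha>" "\<alpha> < exp (-8) / 4" and solves: "solves_BAIF A \<delta> \<alpha>"
  define L where "L = ln ((1/8) / \<alpha>)"
  have "exp (-8) \<le> (1/9 :: real)"
    using exp_ge_add_one_self[of 8] by (simp add: exp_minus field_simps)
  then have "3 < (1/8) / \<alpha>"
    using \<alpha> by (simp add: field_simps)
  then have "\<alpha> < 1/8"
    using \<alpha>(1) by (simp add: field_simps)
  have "exp 1 \<le> (1/8) / \<alpha>"
    using exp_le \<open>3 < (1/8) / \<alpha>\<close> by linarith
  then have "1 \<le> L"
    unfolding L_def using \<alpha>(1) by (subst ln_ge_iff) auto
  have "20 * \<delta>\<^sup>2 \<le> 1"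
    using \<delta> power_mono[of \<delta> "1/8" 2] by (simp add: power2_eq_square)
  with \<open>1 \<le> L\<close> \<delta>(1) have "1/160 * (1 / \<delta>\<^sup>2) * L \<le> (L / (10 * \<delta>\<^sup>2) - 1) / 8"
    by (simp add: field_simps)
  then have "ennreal (1/160 * (1 / \<delta>\<^sup>2) * L) \<le> ennreal ((L / (10 * \<delta>\<^sup>2) - 1) / 8)"
    by (rule ennreal_leI)
  also have "\<dots> \<le> expected_pulls A (inst \<delta> True)"
    unfolding L_def using \<delta> by (intro expected_pulls_lower_bound solves \<alpha>(1) \<open>\<alpha> < 1/8\<close>) auto
  finally show "\<exists>opt. ennreal (1/160 * (1 / \<delta>\<^sup>2) * ln ((1/8) / \<alpha>)) \<le> expected_pulls A (inst \<delta> opt)"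
    unfolding L_def by blast
qed simp_all

end
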